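(* Let $d=1$, $s\in\mathbb{R}$, $q\in[2,\infty]$, $r\in[2,\infty]$, and set $\gamma(q,r)=\frac12-\frac1r$. Then for every $T\in(0,\infty]$, with $I=[0,T)$, \[ \big\|\mathcal{D}_1(t)\chi_{>1}(\nabla)f\big\|_{L^q_t\dot B^s_{r,2}(I)}\lesssim\big\||\nabla|^{\gamma(q,r)-1}\chi_{>1}(\nabla)f\big\|_{\dot B^s_{2,2}}, \] \[ \big\|\partial_t\mathcal{D}_1(t)\chi_{>1}(\nabla)f\big\|_{L^q_t\dot B^s_{r,2}(I)}\lesssim\big\||\nabla|^{\gamma(q,r)}\chi_{>1}(\nabla)f\big\|_{\dot B^s_{2,2}}, \] with implicit constants independent of $T$ and $f$.
   Context: Let $\chi_{\le1}\in C_0^\infty(\mathbb{R})$ be even with $\chi_{\le1}(\xi)=1$ for $|\xi|\le1$ and $0$ for $|\xi|\ge2$; set $\chi_{\le a}(\xi)=\chi_{\le1}(\xi/a)$, $\chi_{>1}=1-\chi_{\le1}$, and for $j\in\mathbb{Z}$ let $P_j$ be the Fourier multiplier with symbol $\chi_{\le2^j}(\xi)-\chi_{\le2^{j-1}}(\xi)$. The homogeneous Besov norm is $\|g\|_{\dot B^s_{r,2}}=\big(\sum_{j\in\mathbb{Z}}(2^{js}\|P_jg\|_{L^r})^2\big)^{1/2}$, and $\|u\|_{L^q_t\dot B^s_{r,2}(I)}=\big\|\|u(t)\|_{\dot B^s_{r,2}}\big\|_{L^q_t(I)}$. $|\nabla|^a$ is the multiplier with symbol $|\xi|^a$. $\mathcal{D}_1(t)$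 is the Fourier multiplier with symbol $e^{-t/2}\frac{2}{\sqrt{1-4\xi^2}}\sinh\big(t\frac{\sqrt{1-4\xi^2}}{2}\big)$ for $|\xi|\le\frac12$ and $e^{-t/2}\frac{2}{\sqrt{4\xi^2-1}}\sin\big(t\frac{\sqrt{4\xi^2-1}}{2}\big)$ for $|\xi|>\frac12$ (the solution operator $g\mapsto\phi$ of $\partial_t^2\phi-\partial_x^2\phi+\partial_t\phi=0$, $\phi(0)=0$, $\partial_t\phi(0)=g$), and $\partial_t\mathcal{D}_1(t)$ is the multiplier with the $t$-derivative of this symbol. *)

theory Defs
  imports "HOL-Analysis.Analysis"
begin

text \<open>Convention: the derivative corresponds to multiplication by i xi, i.e.
  hat f(xi) = int f(x) e^{-i x xi} dx.  Fourier multipliers are realised through the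
  inverse Fourier integral.\<close>

definition fourier :: "(real \<Rightarrow> complex) \<Rightarrow> real \<Rightarrow> complex" where
  "fourier f \<xi> = (\<integral>x. f x * exp (- (\<i> * complex_of_real (x * \<xi>))) \<partial>lborel)"

definition mult_app :: "(real \<Rightarrow> real) \<Rightarrow> (real \<Rightarrow> complex) \<Rightarrow> real \<Rightarrow> complex" where
  "mult_app m f x = (1 / (2 * pi)) *
     (\<integral>\<xi>. complex_of_real (m \<xi>) * fourier f \<xi> * exp (\<i> * complex_of_real (x * \<xi>)) \<partial>lborel)"

definition chi_le :: "(real \<Rightarrow> real) \<Rightarrow> real \<Rightarrow> real \<Rightarrow> real" where
  "chi_le chi a \<xi> = chi (\<xi> / a)"

definition chi_gt1 :: "(real \<Rightarrow> real) \<Rightarrow> real \<Rightarrow> real" where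
  "chi_gt1 chi \<xi> = 1 - chi \<xi>"

definition psi :: "(real \<Rightarrow> real) \<Rightarrow> int \<Rightarrow> real \<Rightarrow> real" where
  "psi chi j \<xi> = chi_le chi (2 powr real_of_int j) \<xi> - chi_le chi (2 powr real_of_int (j - 1)) \<xi>"

definition D1sym :: "real \<Rightarrow> real \<Rightarrow> real" where
  "D1sym t \<xi> =
     (if \<bar>\<xi>\<bar> \<le> 1/2
      then exp (- t / 2) * (2 / sqrt (1 - 4 * \<xi>\<^sup>2)) * sinh (t * sqrt (1 - 4 * \<xi>\<^sup>2) / 2)
      else exp (- t / 2) * (2 / sqrt (4 * \<xi>\<^sup>2 - 1)) * sin (t * sqrt (4 * \<xi>\<^sup>2 - 1) / 2))"

definition dtD1sym :: "real \<Rightarrow> real \<Rightarrow> real" where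
  "dtD1sym t \<xi> = deriv (\<lambda>\<tau>. D1sym \<tau> \<xi>) t"

definition enn_powr :: "ennreal \<Rightarrow> real \<Rightarrow> ennreal" where
  "enn_powr x p = (if x = \<infinity> then \<infinity> else ennreal (enn2real x powr p))"

definition Lpn :: "'a measure \<Rightarrow> ereal \<Rightarrow> ('a \<Rightarrow> ennreal) \<Rightarrow> ennreal" where
  "Lpn M p F =
     (if p = \<infinity> then Inf {c. AE x in M. F x \<le> c}
      else enn_powr (\<integral>\<^sup>+ x. enn_powr (F x) (real_of_ereal p) \<partial>M) (1 / real_of_ereal p))"

text \<open>Homogeneous Besov norm of m(D) f in dot B^s_{r,2}.\<close>
definition besov :: "(real \<Rightarrow> real) \<Rightarrow> real \<Rightarrow> ereal \<Rightarrow> (real \<Rightarrow> real) \<Rightarrow> (real \<Rightarrow> complex) \<Rightarrow> ennreal" where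
  "besov chi s r m f =
     enn_powr (\<integral>\<^sup>+ j. (ennreal (2 powr (real_of_int j * s)) *
                         Lpn lborel r (\<lambda>x. ennreal (norm (mult_app (\<lambda>\<xi>. psi chi j \<xi> * m \<xi>) f x))))\<^sup>2
                 \<partial>count_space (UNIV :: int set)) (1/2)"

text \<open>Norm in L^q_t dot B^s_{r,2}(I), I = [0,T), of t \<mapsto> M(t,D) f.\<close>
definition LqB :: "(real \<Rightarrow> real) \<Rightarrow> ereal \<Rightarrow> ereal \<Rightarrow> real \<Rightarrow> ereal \<Rightarrow>
                   (real \<Rightarrow> real \<Rightarrow> real) \<Rightarrow> (real \<Rightarrow> complex) \<Rightarrow> ennreal" where
  "LqB chi T q s r M f =
     Lpn (restrict_space lborel {t. 0 \<le> t \<and> ereal t < T}) q (\<lambda>t. besov chi s r (M t) f)"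

definition gamma_qr :: "ereal \<Rightarrow> ereal \<Rightarrow> real" where
  "gamma_qr q r = 1/2 - (if r = \<infinity> then 0 else 1 / real_of_ereal r)"

end

(*
  On the support of the cut-off, |xi| > 1, the symbols of D_1(t) and of its time derivative are
  bounded by 2 e^{-t/2} |xi|^{-1} and 2 e^{-t/2}: only the exponential decay in time is used, no
  dispersion.  On the j-th Littlewood-Paley block, where |xi| > 2^{j-1}, this is at most
  4 e^{-t/2} 2^{-j gamma} times the symbol |xi|^{gamma-1} (resp. |xi|^gamma) of the right-hand side.
  A function whose Fourier transform lives in [-2^{j+1}, 2^{j+1}] satisfies the Bernstein bound
  ||g||_inf <= 2^{j/2} ||g||_2 (Cauchy-Schwarz on the Fourier side), and interpolating with
  Plancherel's identity gives ||g||_r <= 2^{j gamma} ||g||_2.  Hence every block on the left is at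
  most 4 e^{-t/2} times the corresponding block on the right; summing over j and integrating
  e^{-qt/2} over t >= 0 yields the estimate with C = 4, uniformly in T.

  Plancherel's identity for the inverse Fourier integral of a continuous, integrable, bounded
  function is obtained by inserting the Gaussian weight exp (-(x/n)^2/2): its Fourier transform is a
  Gaussian kernel, so Fubini turns the weighted L^2 norm into the pairing of the function with its
  Gaussian average, and n -> infinity is handled by monotone and dominated convergence.
*)

theory Submission
  imports Defs "HOL-Probability.Probability"
begin

section \<open>Plancherel's identity\<close>

lemma measurable_cis [measurable]: "cis \<in> borel_measurable borel"
  by (intro borel_measurable_continuous_onI continuous_intros)

lemma measurable_cnj [measurable]: "cnj \<in> borel_measurable borel"
  by (intro borel_measurable_continuous_onI continuous_intros)

definition ifourier :: "(real \<Rightarrow> complex) \<Rightarrow> real \<Rightarrow> complex" where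
  "ifourier a x = (\<integral>\<xi>. a \<xi> * cis (x * \<xi>) \<partial>lborel)"

lemma measurable_ifourier [measurable]:
  assumes [measurable]: "a \<in> borel_measurable borel"
  shows "ifourier a \<in> borel_measurable borel"
  unfolding ifourier_def[abs_def] by measurable

lemma integrable_mult_cis:
  assumes "integrable lborel (a :: real \<Rightarrow> complex)"
  shows "integrable lborel (\<lambda>\<xi>. a \<xi> * cis (x * \<xi>))"
proof (rule Bochner_Integration.integrable_bound[OF integrable_norm[OF assms]])
  show "(\<lambda>\<xi>. a \<xi> * cis (x * \<xi>)) \<in> borel_measurable lborel"
    using borel_measurable_integrable[OF assms] by measurable
qed (simp add: norm_mult)

lemma norm_ifourier_le:
  assumes "integrable lborel a"
  shows "norm (ifourier a x) \<le> (\<integral>\<xi>. norm (a \<xi>) \<partial>lborel)"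
  using integral_norm_bound[of lborel "\<lambda>\<xi>. a \<xi> * cis (x * \<xi>)"]
  unfolding ifourier_def by (simp add: norm_mult)

lemma integrable_tensor_cis:
  fixes u v :: "real \<Rightarrow> complex"
  assumes u: "integrable lborel u" and v: "integrable lborel v"
  shows "integrable (lborel \<Otimes>\<^sub>M lborel) (\<lambda>(x, \<xi>). u x * v \<xi> * cis (x * \<xi>))"
proof (rule lborel_pair.Fubini_integrable)
  have [measurable]: "u \<in> borel_measurable borel" "v \<in> borel_measurable borel"
    using u v by (simp_all add: borel_measurable_integrable)
  show "(\<lambda>(x, \<xi>). u x * v \<xi> * cis (x * \<xi>)) \<in> borel_measurable (lborel \<Otimes>\<^sub>M lborel)"
    by measurable
  have "(\<lambda>x. \<integral>\<xi>. norm (case (x, \<xi>) of (x, \<xi>) \<Rightarrow> u x * v \<xi> * cis (x * \<xi>)) \<partial>lborel)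
      = (\<lambda>x. norm (u x) * (\<integral>\<xi>. norm (v \<xi>) \<partial>lborel))"
    by (simp add: norm_mult)
  then show "integrable lborel
      (\<lambda>x. \<integral>\<xi>. norm (case (x, \<xi>) of (x, \<xi>) \<Rightarrow> u x * v \<xi> * cis (x * \<xi>)) \<partial>lborel)"
    using u by simp
  show "AE x in lborel. integrable lborel (\<lambda>\<xi>. case (x, \<xi>) of (x, \<xi>) \<Rightarrow> u x * v \<xi> * cis (x * \<xi>))"
    using integrable_mult_cis[OF v] by (simp add: mult.assoc integrable_mult_right)
qed

definition gauss_weight :: "real \<Rightarrow> real \<Rightarrow> real" where
  "gauss_weight d x = exp (- (d * x)\<^sup>2 / 2)"

lemma measurable_gauss_weight [measurable]: "gauss_weight d \<in> borel_measurable borel"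
  unfolding gauss_weight_def by measurable

lemma gauss_weight_pos: "0 < gauss_weight d x"
  by (simp add: gauss_weight_def)

lemma integrable_gauss_weight:
  assumes "0 < d"
  shows "integrable lborel (gauss_weight d)"
proof -
  have "gauss_weight d = (\<lambda>x. sqrt (2 * pi) / d * normal_density 0 (1 / d) x)"
    using assms by (simp add: fun_eq_iff gauss_weight_def normal_density_def real_sqrt_mult
        real_sqrt_divide field_simps power2_eq_square)
  then show ?thesis
    by (simp only:) (intro integrable_mult_right integrable_normal_density, use assms in simp)
qed

lemma integral_gauss_weight_cis:
  assumes d: "0 < d"
  shows "(\<integral>x. of_real (gauss_weight d x) * cis (x * u) \<partial>lborel)
       = of_real (2 * pi * normal_density 0 d u)"
proof -
  have std: "(\<integral>y. of_real (exp (- y\<^sup>2 / 2)) * cis (y * v) \<partial>lborel)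
      = of_real (sqrt (2 * pi) * exp (- v\<^sup>2 / 2))" for v
  proof -
    have "char std_normal_distribution v = (\<integral>y. std_normal_density y *\<^sub>R cis (y * v) \<partial>lborel)"
      unfolding char_def by (subst integral_density) (auto simp: cis_conv_exp mult.commute)
    then have "(\<integral>y. of_real (std_normal_density y) * cis (y * v) \<partial>lborel) = exp (- v\<^sup>2 / 2)"
      by (simp add: char_std_normal_distribution scaleR_conv_of_real)
    moreover have "(\<integral>y. of_real (exp (- y\<^sup>2 / 2)) * cis (y * v) \<partial>lborel)
        = (\<integral>y. of_real (sqrt (2 * pi)) * (of_real (std_normal_density y) * cis (y * v)) \<partial>lborel)"
      by (rule Bochner_Integration.integral_cong) (simp_all add: std_normal_density_def)
    ultimately show ?thesis
      by (simp only: integral_mult_right_zero) simp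
  qed
  have "(\<integral>x. of_real (gauss_weight d x) * cis (x * u) \<partial>lborel)
      = (1 / d) *\<^sub>R (\<integral>y. of_real (exp (- y\<^sup>2 / 2)) * cis (y * (u / d)) \<partial>lborel)"
    using d by (subst lborel_integral_real_affine[where c = "1 / d" and t = 0]) (simp_all add: gauss_weight_def)
  also have "\<dots> = (1 / d) *\<^sub>R of_real (sqrt (2 * pi) * exp (- (u / d)\<^sup>2 / 2))"
    by (simp only: std)
  also have "\<dots> = of_real (2 * pi * normal_density 0 d u)"
  proof -
    have "sqrt (2 * pi * d\<^sup>2) = sqrt (2 * pi) * d"
      using d by (simp add: real_sqrt_mult)
    moreover have "sqrt (2 * pi) * sqrt (2 * pi) = 2 * pi"
      by simp
    ultimately have "1 / d * (sqrt (2 * pi) * exp (- (u / d)\<^sup>2 / 2)) = 2 * pi * normal_density 0 d u"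
      using d unfolding normal_density_def by (simp add: field_simps power2_eq_square)
    then show ?thesis
      by (metis scaleR_conv_of_real of_real_mult)
  qed
  finally show ?thesis .
qed

definition gauss_average :: "(real \<Rightarrow> complex) \<Rightarrow> real \<Rightarrow> real \<Rightarrow> complex" where
  "gauss_average a d \<xi> = (\<integral>\<eta>. of_real (normal_density \<xi> d \<eta>) * a \<eta> \<partial>lborel)"

lemma fourier_gauss_weight_cnj_ifourier:
  assumes a: "integrable lborel a" and d: "0 < d"
  shows "(\<integral>x. of_real (gauss_weight d x) * cnj (ifourier a x) * cis (x * \<xi>) \<partial>lborel)
       = 2 * pi * cnj (gauss_average a d \<xi>)"
proof -
  define w :: "real \<Rightarrow> complex" where "w x = of_real (gauss_weight d x) * cis (x * - \<xi>)" for x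
  have w: "integrable lborel w"
    unfolding w_def[abs_def]
    using integrable_mult_cis[of "\<lambda>x. of_real (gauss_weight d x)" "- \<xi>"] integrable_gauss_weight[OF d]
    by (simp add: mult.commute)
  have "(\<integral>x. w x * ifourier a x \<partial>lborel) = (\<integral>x. \<integral>\<eta>. w x * a \<eta> * cis (x * \<eta>) \<partial>lborel \<partial>lborel)"
    unfolding ifourier_def by (simp flip: integral_mult_right_zero add: ac_simps)
  also have "\<dots> = (\<integral>\<eta>. \<integral>x. w x * a \<eta> * cis (x * \<eta>) \<partial>lborel \<partial>lborel)"
    using lborel_pair.Fubini_integral[OF integrable_tensor_cis[OF w a]] by simp
  also have "\<dots> = (\<integral>\<eta>. of_real (2 * pi * normal_density \<xi> d \<eta>) * a \<eta> \<partial>lborel)"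
  proof (rule Bochner_Integration.integral_cong[OF refl])
    fix \<eta>
    have "cis (x * (\<eta> - \<xi>)) = cis (x * - \<xi>) * cis (x * \<eta>)" for x
      by (simp add: cis_mult right_diff_distrib)
    then have "w x * a \<eta> * cis (x * \<eta>) = a \<eta> * (of_real (gauss_weight d x) * cis (x * (\<eta> - \<xi>)))" for x
      by (simp only: w_def ac_simps)
    then have "(\<integral>x. w x * a \<eta> * cis (x * \<eta>) \<partial>lborel)
        = a \<eta> * (\<integral>x. of_real (gauss_weight d x) * cis (x * (\<eta> - \<xi>)) \<partial>lborel)"
      by (simp only: integral_mult_right_zero)
    also have "\<dots> = a \<eta> * of_real (2 * pi * normal_density 0 d (\<eta> - \<xi>))"
      unfolding integral_gauss_weight_cis[OF d] ..
    finally show "(\<integral>x. w x * a \<eta> * cis (x * \<eta>) \<partial>lborel)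
        = of_real (2 * pi * normal_density \<xi> d \<eta>) * a \<eta>"
      by (simp add: normal_density_def power2_commute)
  qed
  also have "\<dots> = 2 * pi * gauss_average a d \<xi>"
    unfolding gauss_average_def by (simp flip: integral_mult_right_zero add: mult.assoc)
  finally have "cnj (\<integral>x. w x * ifourier a x \<partial>lborel) = 2 * pi * cnj (gauss_average a d \<xi>)"
    by simp
  moreover have "cnj (\<integral>x. w x * ifourier a x \<partial>lborel)
      = (\<integral>x. of_real (gauss_weight d x) * cnj (ifourier a x) * cis (x * \<xi>) \<partial>lborel)"
    by (subst Bochner_Integration.integral_cnj[symmetric]) (simp add: w_def cis_cnj ac_simps)
  ultimately show ?thesis
    by simp
qed

lemma gauss_weighted_energy:
  assumes a: "integrable lborel a" and d: "0 < d"
  shows "of_real (\<integral>x. gauss_weight d x * (norm (ifourier a x))\<^sup>2 \<partial>lborel)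
       = 2 * pi * (\<integral>\<xi>. a \<xi> * cnj (gauss_average a d \<xi>) \<partial>lborel)"
proof -
  define u :: "real \<Rightarrow> complex" where "u x = of_real (gauss_weight d x) * cnj (ifourier a x)" for x
  have [measurable]: "a \<in> borel_measurable borel"
    using a by (simp add: borel_measurable_integrable)
  have u: "integrable lborel u"
  proof (rule Bochner_Integration.integrable_bound)
    show "integrable lborel (\<lambda>x. gauss_weight d x * (\<integral>\<xi>. norm (a \<xi>) \<partial>lborel))"
      using integrable_gauss_weight[OF d] by simp
    show "u \<in> borel_measurable lborel"
      unfolding u_def[abs_def] by measurable
    show "AE x in lborel. norm (u x) \<le> norm (gauss_weight d x * (\<integral>\<xi>. norm (a \<xi>) \<partial>lborel))"
      using norm_ifourier_le[OF a] gauss_weight_pos[of d]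
      by (simp add: u_def norm_mult abs_mult less_imp_le mult_left_mono)
  qed
  have "of_real (gauss_weight d x * (norm (ifourier a x))\<^sup>2) = u x * ifourier a x" for x
    by (simp only: u_def of_real_mult complex_norm_square mult.assoc mult.commute[of "cnj _"])
  then have "of_real (\<integral>x. gauss_weight d x * (norm (ifourier a x))\<^sup>2 \<partial>lborel)
      = (\<integral>x. \<integral>\<xi>. u x * a \<xi> * cis (x * \<xi>) \<partial>lborel \<partial>lborel)"
    unfolding integral_complex_of_real[symmetric] ifourier_def[of a]
    by (simp flip: integral_mult_right_zero add: mult.assoc)
  also have "\<dots> = (\<integral>\<xi>. \<integral>x. u x * a \<xi> * cis (x * \<xi>) \<partial>lborel \<partial>lborel)"
    using lborel_pair.Fubini_integral[OF integrable_tensor_cis[OF u a]] by simp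
  also have "\<dots> = (\<integral>\<xi>. a \<xi> * (2 * pi * cnj (gauss_average a d \<xi>)) \<partial>lborel)"
  proof (rule Bochner_Integration.integral_cong[OF refl])
    fix \<xi>
    have "(\<integral>x. u x * a \<xi> * cis (x * \<xi>) \<partial>lborel) = a \<xi> * (\<integral>x. u x * cis (x * \<xi>) \<partial>lborel)"
      by (simp flip: integral_mult_right_zero add: ac_simps)
    then show "(\<integral>x. u x * a \<xi> * cis (x * \<xi>) \<partial>lborel) = a \<xi> * (2 * pi * cnj (gauss_average a d \<xi>))"
      unfolding u_def fourier_gauss_weight_cnj_ifourier[OF a d] .
  qed
  also have "\<dots> = 2 * pi * (\<integral>\<xi>. a \<xi> * cnj (gauss_average a d \<xi>) \<partial>lborel)"
    by (simp flip: integral_mult_right_zero add: ac_simps)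
  finally show ?thesis .
qed

lemma gauss_average_eq:
  assumes d: "0 < d"
  shows "gauss_average a d \<xi> = (\<integral>y. of_real (std_normal_density y) * a (\<xi> + d * y) \<partial>lborel)"
proof -
  have std: "d * normal_density \<xi> d (\<xi> + d * y) = std_normal_density y" for y
    using d by (simp add: normal_density_def real_sqrt_mult power_mult_distrib field_simps)
  have "gauss_average a d \<xi>
      = \<bar>d\<bar> *\<^sub>R (\<integral>y. of_real (normal_density \<xi> d (\<xi> + d * y)) * a (\<xi> + d * y) \<partial>lborel)"
    unfolding gauss_average_def using d by (subst lborel_integral_real_affine[where c = d and t = \<xi>]) auto
  also have "\<dots> = (\<integral>y. of_real (d * normal_density \<xi> d (\<xi> + d * y)) * a (\<xi> + d * y) \<partial>lborel)"
    using d by (simp add: scaleR_conv_of_real mult.assoc flip: integral_mult_right_zero)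
  finally show ?thesis
    unfolding std .
qed

lemma measurable_gauss_average [measurable]:
  assumes [measurable]: "a \<in> borel_measurable borel"
  shows "gauss_average a d \<in> borel_measurable borel"
proof -
  have "(\<lambda>(\<xi>, \<eta>). of_real (normal_density \<xi> d \<eta>) * a \<eta>) \<in> borel_measurable (borel \<Otimes>\<^sub>M lborel)"
    unfolding normal_density_def by measurable
  then show ?thesis
    unfolding gauss_average_def[abs_def] by (rule lborel.borel_measurable_lebesgue_integral)
qed

lemma norm_gauss_average_le:
  assumes d: "0 < d" and [measurable]: "a \<in> borel_measurable borel" and M: "\<And>\<eta>. norm (a \<eta>) \<le> M"
  shows "norm (gauss_average a d \<xi>) \<le> M"
proof -
  have "0 \<le> M"
    using order_trans[OF norm_ge_zero M] .
  have "norm (gauss_average a d \<xi>) \<le> (\<integral>\<eta>. norm (of_real (normal_density \<xi> d \<eta>) * a \<eta>) \<partial>lborel)"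
    unfolding gauss_average_def by (rule integral_norm_bound)
  also have "\<dots> \<le> (\<integral>\<eta>. normal_density \<xi> d \<eta> * M \<partial>lborel)"
  proof (rule integral_mono)
    show "integrable lborel (\<lambda>\<eta>. normal_density \<xi> d \<eta> * M)"
      using d by simp
    show "integrable lborel (\<lambda>\<eta>. norm (of_real (normal_density \<xi> d \<eta>) * a \<eta>))"
    proof (rule Bochner_Integration.integrable_bound)
      show "(\<lambda>\<eta>. norm (of_real (normal_density \<xi> d \<eta>) * a \<eta>)) \<in> borel_measurable lborel"
        by measurable
      show "AE \<eta> in lborel. norm (norm (of_real (normal_density \<xi> d \<eta>) * a \<eta>))
          \<le> norm (normal_density \<xi> d \<eta> * M)"
        using M \<open>0 \<le> M\<close> by (intro AE_I2) (simp add: norm_mult abs_mult mult_left_mono)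
    qed fact
  qed (use M in \<open>simp add: norm_mult mult_left_mono\<close>)
  also have "\<dots> = M"
    using d by simp
  finally show ?thesis .
qed

lemma tendsto_gauss_average:
  fixes a :: "real \<Rightarrow> complex"
  assumes cont: "continuous_on UNIV a" and M: "\<And>\<eta>. norm (a \<eta>) \<le> M"
    and d_pos: "\<And>n. 0 < d n" and d_lim: "d \<longlonglongrightarrow> 0"
  shows "(\<lambda>n. gauss_average a (d n) \<xi>) \<longlonglongrightarrow> a \<xi>"
proof -
  have [measurable]: "a \<in> borel_measurable borel"
    using cont by (rule borel_measurable_continuous_onI)
  have "(\<lambda>n. \<integral>y. of_real (std_normal_density y) * a (\<xi> + d n * y) \<partial>lborel)
      \<longlonglongrightarrow> (\<integral>y. of_real (std_normal_density y) * a \<xi> \<partial>lborel)"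
  proof (rule integral_dominated_convergence[where w = "\<lambda>y. std_normal_density y * M"])
    show "integrable lborel (\<lambda>y. std_normal_density y * M)"
      by simp
    show "AE y in lborel. (\<lambda>n. of_real (std_normal_density y) * a (\<xi> + d n * y))
        \<longlonglongrightarrow> of_real (std_normal_density y) * a \<xi>"
    proof (intro AE_I2 tendsto_mult_left)
      fix y
      have "isCont a \<xi>"
        using cont by (simp add: continuous_on_eq_continuous_at)
      moreover have "(\<lambda>n. \<xi> + d n * y) \<longlonglongrightarrow> \<xi>"
        using tendsto_add[OF tendsto_const tendsto_mult_left_zero[OF d_lim]] by simp
      ultimately show "(\<lambda>n. a (\<xi> + d n * y)) \<longlonglongrightarrow> a \<xi>"
        by (rule isCont_tendsto_compose)
    qed
    show "AE y in lborel. norm (of_real (std_normal_density y) * a (\<xi> + d n * y))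
        \<le> std_normal_density y * M" for n
      using M by (intro AE_I2) (simp add: norm_mult mult_left_mono)
  qed simp_all
  then show ?thesis
    using d_pos by (simp add: gauss_average_eq)
qed

lemma tendsto_nn_integral_gauss_weight:
  fixes h :: "real \<Rightarrow> real"
  assumes [measurable]: "h \<in> borel_measurable borel" and h: "\<And>x. 0 \<le> h x"
  shows "(\<lambda>n. \<integral>\<^sup>+x. ennreal (gauss_weight (1 / Suc n) x * h x) \<partial>lborel) \<longlonglongrightarrow> (\<integral>\<^sup>+x. ennreal (h x) \<partial>lborel)"
proof (rule nn_integral_LIMSEQ)
  show "incseq (\<lambda>n x. ennreal (gauss_weight (1 / Suc n) x * h x))"
  proof (intro incseq_SucI le_funI ennreal_leI mult_right_mono h)
    fix n x
    have "(1 / Suc (Suc n) * x)\<^sup>2 \<le> (1 / Suc n * x)\<^sup>2"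
      unfolding power_mult_distrib by (intro mult_right_mono power_mono) (auto simp: frac_le)
    then show "gauss_weight (1 / Suc n) x \<le> gauss_weight (1 / Suc (Suc n)) x"
      by (simp add: gauss_weight_def)
  qed
  show "(\<lambda>n. ennreal (gauss_weight (1 / Suc n) x * h x)) \<longlonglongrightarrow> ennreal (h x)" for x
  proof (intro tendsto_ennrealI)
    have "(\<lambda>n. exp (- (1 / Suc n * x)\<^sup>2 / 2) * h x) \<longlonglongrightarrow> exp (- (0 * x)\<^sup>2 / 2) * h x"
      by (intro tendsto_intros LIMSEQ_Suc[OF lim_const_over_n]) simp
    then show "(\<lambda>n. gauss_weight (1 / Suc n) x * h x) \<longlonglongrightarrow> h x"
      by (simp add: gauss_weight_def)
  qed
qed measurable

lemma tendsto_integral_mult_cnj_gauss_average: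
  fixes a :: "real \<Rightarrow> complex"
  assumes cont: "continuous_on UNIV a" and int: "integrable lborel a" and M: "\<And>\<xi>. norm (a \<xi>) \<le> M"
    and d_pos: "\<And>n. 0 < d n" and d_lim: "d \<longlonglongrightarrow> 0"
  shows "(\<lambda>n. \<integral>\<xi>. a \<xi> * cnj (gauss_average a (d n) \<xi>) \<partial>lborel)
       \<longlonglongrightarrow> of_real (\<integral>\<xi>. (norm (a \<xi>))\<^sup>2 \<partial>lborel)"
proof -
  have [measurable]: "a \<in> borel_measurable borel"
    using cont by (rule borel_measurable_continuous_onI)
  have "(\<lambda>n. \<integral>\<xi>. a \<xi> * cnj (gauss_average a (d n) \<xi>) \<partial>lborel) \<longlonglongrightarrow> (\<integral>\<xi>. a \<xi> * cnj (a \<xi>) \<partial>lborel)"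
  proof (rule integral_dominated_convergence[where w = "\<lambda>\<xi>. norm (a \<xi>) * M"])
    show "integrable lborel (\<lambda>\<xi>. norm (a \<xi>) * M)"
      using int by simp
    show "AE \<xi> in lborel. (\<lambda>n. a \<xi> * cnj (gauss_average a (d n) \<xi>)) \<longlonglongrightarrow> a \<xi> * cnj (a \<xi>)"
      using tendsto_gauss_average[OF cont M d_pos d_lim]
      by (intro AE_I2 tendsto_mult_left tendsto_cnj)
    show "AE \<xi> in lborel. norm (a \<xi> * cnj (gauss_average a (d n) \<xi>)) \<le> norm (a \<xi>) * M" for n
      using norm_gauss_average_le[OF d_pos _ M]
      by (intro AE_I2) (simp add: norm_mult mult_left_mono)
  qed measurable
  also have "(\<integral>\<xi>. a \<xi> * cnj (a \<xi>) \<partial>lborel) = of_real (\<integral>\<xi>. (norm (a \<xi>))\<^sup>2 \<partial>lborel)"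
    unfolding integral_complex_of_real[symmetric] complex_norm_square ..
  finally show ?thesis .
qed

theorem plancherel:
  fixes a :: "real \<Rightarrow> complex"
  assumes cont: "continuous_on UNIV a" and int: "integrable lborel a" and bdd: "bounded (range a)"
  shows "(\<integral>\<^sup>+x. ennreal ((norm (ifourier a x))\<^sup>2) \<partial>lborel)
       = ennreal (2 * pi * (\<integral>\<xi>. (norm (a \<xi>))\<^sup>2 \<partial>lborel))"
proof -
  obtain M where M: "\<And>\<xi>. norm (a \<xi>) \<le> M"
    using bdd by (auto simp: bounded_iff)
  have [measurable]: "a \<in> borel_measurable borel"
    using cont by (rule borel_measurable_continuous_onI)
  define E where "E n = (\<integral>x. gauss_weight (1 / Suc n) x * (norm (ifourier a x))\<^sup>2 \<partial>lborel)" for n :: nat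
  have "ennreal (E n) = (\<integral>\<^sup>+x. ennreal (gauss_weight (1 / Suc n) x * (norm (ifourier a x))\<^sup>2) \<partial>lborel)" for n
  proof -
    have "integrable lborel (\<lambda>x. gauss_weight (1 / Suc n) x * (norm (ifourier a x))\<^sup>2)"
    proof (rule Bochner_Integration.integrable_bound)
      show "integrable lborel (\<lambda>x. gauss_weight (1 / Suc n) x * (\<integral>\<xi>. norm (a \<xi>) \<partial>lborel)\<^sup>2)"
        using integrable_gauss_weight[of "1 / Suc n"] by simp
      show "AE x in lborel. norm (gauss_weight (1 / Suc n) x * (norm (ifourier a x))\<^sup>2)
          \<le> norm (gauss_weight (1 / Suc n) x * (\<integral>\<xi>. norm (a \<xi>) \<partial>lborel)\<^sup>2)"
        using norm_ifourier_le[OF int] gauss_weight_pos[of "1 / Suc n"]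
        by (intro AE_I2) (simp add: abs_mult less_imp_le mult_left_mono power_mono)
    qed measurable
    then show ?thesis
      unfolding E_def using gauss_weight_pos[of "1 / Suc n"]
      by (intro nn_integral_eq_integral[symmetric] AE_I2) (simp_all add: less_imp_le)
  qed
  then have "(\<lambda>n. ennreal (E n)) \<longlonglongrightarrow> (\<integral>\<^sup>+x. ennreal ((norm (ifourier a x))\<^sup>2) \<partial>lborel)"
    using tendsto_nn_integral_gauss_weight[of "\<lambda>x. (norm (ifourier a x))\<^sup>2"] by simp
  moreover have "(\<lambda>n. ennreal (E n)) \<longlonglongrightarrow> ennreal (2 * pi * (\<integral>\<xi>. (norm (a \<xi>))\<^sup>2 \<partial>lborel))"
  proof (rule tendsto_ennrealI)
    have d_pos: "0 < 1 / real (Suc n)" for n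
      by simp
    have "(\<lambda>n. of_real (E n)) \<longlonglongrightarrow> of_real (2 * pi) * (of_real (\<integral>\<xi>. (norm (a \<xi>))\<^sup>2 \<partial>lborel) :: complex)"
      unfolding E_def gauss_weighted_energy[OF int d_pos]
      by (intro tendsto_mult_left tendsto_integral_mult_cnj_gauss_average[OF cont int M]
          LIMSEQ_Suc[OF lim_const_over_n]) simp_all
    then show "E \<longlonglongrightarrow> 2 * pi * (\<integral>\<xi>. (norm (a \<xi>))\<^sup>2 \<partial>lborel)"
      by (simp only: of_real_mult[symmetric] tendsto_of_real_iff)
  qed
  ultimately show ?thesis
    by (rule LIMSEQ_unique)
qed

section \<open>Fourier multipliers with compactly supported symbols\<close>

lemma integrable_continuous_vanishing:
  fixes a :: "real \<Rightarrow> 'b::{banach, second_countable_topology}"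
  assumes cont: "continuous_on UNIV a" and vanish: "\<And>\<xi>. R < \<bar>\<xi>\<bar> \<Longrightarrow> a \<xi> = 0"
  shows "integrable lborel a"
proof -
  have "integrable lborel (\<lambda>x. indicator {-R..R} x *\<^sub>R a x)"
    by (rule borel_integrable_compact) (auto intro: continuous_on_subset[OF cont])
  moreover have "indicator {-R..R} x *\<^sub>R a x = a x" for x
    using vanish[of x] by (cases "\<bar>x\<bar> \<le> R") (auto simp: indicator_def abs_le_iff)
  ultimately show ?thesis
    by simp
qed

lemma bounded_continuous_vanishing:
  fixes a :: "real \<Rightarrow> 'b::real_normed_vector"
  assumes cont: "continuous_on UNIV a" and vanish: "\<And>\<xi>. R < \<bar>\<xi>\<bar> \<Longrightarrow> a \<xi> = 0"
  shows "bounded (range a)"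
proof -
  have "bounded (a ` {-R..R})"
    by (intro compact_imp_bounded compact_continuous_image continuous_on_subset[OF cont]) auto
  moreover have "range a \<subseteq> insert 0 (a ` {-R..R})"
    using vanish by (force simp: abs_le_iff not_le)
  ultimately show ?thesis
    by (metis bounded_insert bounded_subset)
qed

lemma integral_norm_le_sqrt:
  fixes a :: "real \<Rightarrow> 'b::{banach, second_countable_topology}"
  assumes cont: "continuous_on UNIV a" and vanish: "\<And>\<xi>. R < \<bar>\<xi>\<bar> \<Longrightarrow> a \<xi> = 0" and R: "0 \<le> R"
  shows "(\<integral>\<xi>. norm (a \<xi>) \<partial>lborel) \<le> sqrt (2 * R * (\<integral>\<xi>. (norm (a \<xi>))\<^sup>2 \<partial>lborel))"
proof -
  have [measurable]: "a \<in> borel_measurable borel"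
    using cont by (rule borel_measurable_continuous_onI)
  have int1: "integrable lborel (\<lambda>\<xi>. norm (a \<xi>))" and int2: "integrable lborel (\<lambda>\<xi>. (norm (a \<xi>))\<^sup>2)"
    using vanish by (auto intro!: integrable_continuous_vanishing[of _ R] continuous_intros cont)
  have "ennreal ((\<integral>\<xi>. norm (a \<xi>) \<partial>lborel)\<^sup>2)
      = (\<integral>\<^sup>+\<xi>. ennreal (norm (a \<xi>)) * indicator {-R..R} \<xi> \<partial>lborel)\<^sup>2"
  proof -
    have "ennreal (norm (a \<xi>)) * indicator {-R..R} \<xi> = ennreal (norm (a \<xi>))" for \<xi>
      using vanish[of \<xi>] by (cases "\<bar>\<xi>\<bar> \<le> R") (auto simp: indicator_def abs_le_iff)
    then show ?thesis
      using int1 by (simp add: nn_integral_eq_integral ennreal_power)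
  qed
  also have "\<dots> \<le> (\<integral>\<^sup>+\<xi>. (ennreal (norm (a \<xi>)))\<^sup>2 \<partial>lborel) * (\<integral>\<^sup>+\<xi>. (indicator {-R..R} \<xi>)\<^sup>2 \<partial>lborel)"
    by (rule Cauchy_Schwarz_nn_integral) measurable
  also have "\<dots> = ennreal ((\<integral>\<xi>. (norm (a \<xi>))\<^sup>2 \<partial>lborel) * (2 * R))"
  proof -
    have "(\<integral>\<^sup>+\<xi>. (ennreal (norm (a \<xi>)))\<^sup>2 \<partial>lborel) = ennreal (\<integral>\<xi>. (norm (a \<xi>))\<^sup>2 \<partial>lborel)"
      using int2 by (simp add: ennreal_power nn_integral_eq_integral)
    moreover have "(\<integral>\<^sup>+\<xi>. (indicator {-R..R} \<xi>)\<^sup>2 \<partial>lborel) = ennreal (2 * R)"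
    proof -
      have "(indicator {-R..R} \<xi> :: ennreal)\<^sup>2 = indicator {-R..R} \<xi>" for \<xi>
        by (simp add: indicator_def)
      then show ?thesis
        using R by simp
    qed
    ultimately show ?thesis
      using R by (simp add: ennreal_mult)
  qed
  finally have "(\<integral>\<xi>. norm (a \<xi>) \<partial>lborel)\<^sup>2 \<le> 2 * R * (\<integral>\<xi>. (norm (a \<xi>))\<^sup>2 \<partial>lborel)"
    using R integral_nonneg_AE[of "\<lambda>\<xi>. (norm (a \<xi>))\<^sup>2" lborel]
    by (auto simp: ennreal_le_iff2 mult.commute)
  then show ?thesis
    by (simp add: real_le_rsqrt)
qed

lemma continuous_on_fourier:
  assumes f: "integrable lborel f"
  shows "continuous_on UNIV (fourier f)"
proof (rule continuous_at_imp_continuous_on, intro ballI)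
  fix \<xi> :: real
  have [measurable]: "f \<in> borel_measurable borel"
    using f by (simp add: borel_measurable_integrable)
  show "isCont (fourier f) \<xi>"
    unfolding continuous_at_sequentially comp_def fourier_def
  proof (intro allI impI integral_dominated_convergence[where w = "\<lambda>x. norm (f x)"])
    fix X :: "nat \<Rightarrow> real"
    assume X: "X \<longlonglongrightarrow> \<xi>"
    show "AE x in lborel. (\<lambda>n. f x * exp (- (\<i> * of_real (x * X n)))) \<longlonglongrightarrow> f x * exp (- (\<i> * of_real (x * \<xi>)))"
      by (intro AE_I2 tendsto_intros X)
    show "AE x in lborel. norm (f x * exp (- (\<i> * of_real (x * X n)))) \<le> norm (f x)" for n
      using norm_exp_i_times[of "- (x * X n)" for x] by (intro AE_I2) (simp add: norm_mult)
  qed (use f in simp_all)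
qed

lemma mult_app_eq_ifourier:
  "mult_app m f x = ifourier (\<lambda>\<xi>. of_real (m \<xi>) * fourier f \<xi>) x / (2 * pi)"
  unfolding mult_app_def ifourier_def cis_conv_exp by simp

lemma continuous_on_mult_fourier:
  assumes "integrable lborel f" and "continuous_on UNIV m"
  shows "continuous_on UNIV (\<lambda>\<xi>. of_real (m \<xi>) * fourier f \<xi>)"
  using assms continuous_on_fourier by (intro continuous_intros) auto

lemma nn_integral_mult_app_square:
  fixes f :: "real \<Rightarrow> complex" and m :: "real \<Rightarrow> real"
  assumes f: "integrable lborel f" and m: "continuous_on UNIV m"
    and vanish: "\<And>\<xi>. R < \<bar>\<xi>\<bar> \<Longrightarrow> m \<xi> = 0"
  shows "(\<integral>\<^sup>+x. ennreal ((norm (mult_app m f x))\<^sup>2) \<partial>lborel)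
       = ennreal ((\<integral>\<xi>. (m \<xi> * norm (fourier f \<xi>))\<^sup>2 \<partial>lborel) / (2 * pi))"
proof -
  define a where "a \<xi> = of_real (m \<xi>) * fourier f \<xi>" for \<xi>
  define E where "E = (\<integral>\<xi>. (m \<xi> * norm (fourier f \<xi>))\<^sup>2 \<partial>lborel)"
  have cont: "continuous_on UNIV a"
    unfolding a_def[abs_def] using f m by (rule continuous_on_mult_fourier)
  have a_vanish: "a \<xi> = 0" if "R < \<bar>\<xi>\<bar>" for \<xi>
    using vanish[OF that] by (simp add: a_def)
  have [measurable]: "a \<in> borel_measurable borel"
    using cont by (rule borel_measurable_continuous_onI)
  have "(\<integral>\<^sup>+x. ennreal ((norm (mult_app m f x))\<^sup>2) \<partial>lborel)
      = (\<integral>\<^sup>+x. ennreal (1 / (2 * pi)\<^sup>2) * ennreal ((norm (ifourier a x))\<^sup>2) \<partial>lborel)"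
    unfolding mult_app_eq_ifourier a_def
    by (intro nn_integral_cong) (simp add: norm_divide power_divide ennreal_mult'[symmetric])
  also have "\<dots> = ennreal (1 / (2 * pi)\<^sup>2) * (\<integral>\<^sup>+x. ennreal ((norm (ifourier a x))\<^sup>2) \<partial>lborel)"
    by (rule nn_integral_cmult) measurable
  also have "\<dots> = ennreal (1 / (2 * pi)\<^sup>2) * ennreal (2 * pi * E)"
  proof -
    have "E = (\<integral>\<xi>. (norm (a \<xi>))\<^sup>2 \<partial>lborel)"
      unfolding E_def a_def by (simp add: norm_mult power_mult_distrib)
    then show ?thesis
      using plancherel[OF cont integrable_continuous_vanishing[OF cont a_vanish]
          bounded_continuous_vanishing[OF cont a_vanish]]
      by simp
  qed
  also have "\<dots> = ennreal (E / (2 * pi))"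
    by (simp add: E_def integral_nonneg_AE ennreal_mult'[symmetric] power2_eq_square)
  finally show ?thesis
    unfolding E_def .
qed

lemma norm_mult_app_le:
  fixes f :: "real \<Rightarrow> complex" and m :: "real \<Rightarrow> real"
  assumes f: "integrable lborel f" and m: "continuous_on UNIV m"
    and vanish: "\<And>\<xi>. R < \<bar>\<xi>\<bar> \<Longrightarrow> m \<xi> = 0" and R: "0 \<le> R"
  shows "norm (mult_app m f x)
       \<le> sqrt (R / pi) * sqrt ((\<integral>\<xi>. (m \<xi> * norm (fourier f \<xi>))\<^sup>2 \<partial>lborel) / (2 * pi))"
proof -
  define a where "a \<xi> = of_real (m \<xi>) * fourier f \<xi>" for \<xi>
  define E where "E = (\<integral>\<xi>. (m \<xi> * norm (fourier f \<xi>))\<^sup>2 \<partial>lborel)"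
  have cont: "continuous_on UNIV a"
    unfolding a_def[abs_def] using f m by (rule continuous_on_mult_fourier)
  have a_vanish: "a \<xi> = 0" if "R < \<bar>\<xi>\<bar>" for \<xi>
    using vanish[OF that] by (simp add: a_def)
  have "norm (mult_app m f x) \<le> (\<integral>\<xi>. norm (a \<xi>) \<partial>lborel) / (2 * pi)"
    unfolding mult_app_eq_ifourier a_def[symmetric]
    using norm_ifourier_le[OF integrable_continuous_vanishing[OF cont a_vanish]]
    by (simp add: norm_divide divide_right_mono)
  also have "\<dots> \<le> sqrt (2 * R * E) / (2 * pi)"
    using integral_norm_le_sqrt[OF cont a_vanish R]
    by (simp add: E_def a_def norm_mult power_mult_distrib divide_right_mono)
  also have "\<dots> = sqrt (R / pi) * sqrt (E / (2 * pi))"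
  proof -
    have "sqrt (2 * R * E) / (2 * pi) = sqrt (2 * R * E / (2 * pi)\<^sup>2)"
      by (simp only: real_sqrt_divide real_sqrt_abs) simp
    also have "\<dots> = sqrt (R / pi * (E / (2 * pi)))"
      by (rule arg_cong[where f = sqrt]) (simp add: power2_eq_square field_simps)
    finally show ?thesis
      by (simp only: real_sqrt_mult)
  qed
  finally show ?thesis
    unfolding E_def .
qed

section \<open>Lebesgue norms and the Bernstein inequality\<close>

lemma enn_powr_ennreal [simp]: "0 \<le> y \<Longrightarrow> enn_powr (ennreal y) p = ennreal (y powr p)"
  by (simp add: enn_powr_def)

lemma enn_powr_mono:
  assumes "X \<le> Y" and "0 \<le> p"
  shows "enn_powr X p \<le> enn_powr Y p"
proof (cases "Y = \<infinity>")
  case False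
  then obtain x y where "X = ennreal x" "Y = ennreal y" "0 \<le> x" "x \<le> y"
    using assms(1) by (cases X; cases Y) (auto simp: top_unique)
  then show ?thesis
    using assms(2) by (simp add: ennreal_leI powr_mono2)
qed (simp add: enn_powr_def)

lemma enn_powr_mult_square:
  assumes c: "0 < c"
  shows "enn_powr (ennreal (c\<^sup>2) * X) (1 / 2) = ennreal c * enn_powr X (1 / 2)"
proof (cases "X = \<infinity>")
  case False
  then obtain x where "X = ennreal x" "0 \<le> x"
    by (cases X) auto
  then show ?thesis
    using c by (simp add: ennreal_mult'[symmetric] powr_mult powr_half_sqrt)
qed (use c in \<open>simp add: enn_powr_def ennreal_mult_top\<close>)

lemma Lpn_2_eq_sqrt:
  assumes "\<And>x. 0 \<le> G x" and "(\<integral>\<^sup>+x. ennreal ((G x)\<^sup>2) \<partial>M) = ennreal V" and "0 \<le> V"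
  shows "Lpn M 2 (\<lambda>x. ennreal (G x)) = ennreal (sqrt V)"
  using assms by (simp add: Lpn_def powr_half_sqrt)

lemma nn_integral_powr_le_sup_L2:
  fixes G :: "'a \<Rightarrow> real"
  assumes [measurable]: "G \<in> borel_measurable M" and G_nonneg: "\<And>x. 0 \<le> G x"
    and G_sup: "\<And>x. G x \<le> W" and \<rho>: "2 \<le> \<rho>"
  shows "(\<integral>\<^sup>+x. ennreal (G x powr \<rho>) \<partial>M) \<le> ennreal (W powr (\<rho> - 2)) * (\<integral>\<^sup>+x. ennreal ((G x)\<^sup>2) \<partial>M)"
proof -
  have "G x powr \<rho> \<le> W powr (\<rho> - 2) * (G x)\<^sup>2" for x
  proof -
    have "G x powr \<rho> = G x powr (\<rho> - 2) * G x powr 2"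
      by (simp add: powr_add[symmetric])
    also have "\<dots> \<le> W powr (\<rho> - 2) * (G x)\<^sup>2"
      using G_nonneg G_sup \<rho> by (auto intro!: mult_right_mono powr_mono2)
    finally show ?thesis .
  qed
  then have "(\<integral>\<^sup>+x. ennreal (G x powr \<rho>) \<partial>M) \<le> (\<integral>\<^sup>+x. ennreal (W powr (\<rho> - 2)) * ennreal ((G x)\<^sup>2) \<partial>M)"
    by (intro nn_integral_mono) (simp add: ennreal_mult'[symmetric] ennreal_leI)
  also have "\<dots> = ennreal (W powr (\<rho> - 2)) * (\<integral>\<^sup>+x. ennreal ((G x)\<^sup>2) \<partial>M)"
    by (rule nn_integral_cmult) measurable
  finally show ?thesis .
qed

lemma Lpn_le_interpolation:
  fixes G :: "'a \<Rightarrow> real" and r :: ereal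
  assumes [measurable]: "G \<in> borel_measurable M" and G_nonneg: "\<And>x. 0 \<le> G x"
    and G_sup: "\<And>x. G x \<le> sqrt N * sqrt A" and G_L2: "(\<integral>\<^sup>+x. ennreal ((G x)\<^sup>2) \<partial>M) \<le> ennreal A"
    and A: "0 \<le> A" and N: "0 < N" and r: "2 \<le> r"
  shows "Lpn M r (\<lambda>x. ennreal (G x)) \<le> ennreal (N powr gamma_qr q r * sqrt A)"
proof (cases r)
  case PInf
  have "Inf {c. AE x in M. ennreal (G x) \<le> c} \<le> ennreal (sqrt N * sqrt A)"
    using G_sup by (intro Inf_lower) (auto intro!: AE_I2 ennreal_leI)
  then show ?thesis
    using PInf N by (simp add: Lpn_def gamma_qr_def powr_half_sqrt)
next
  case (real \<rho>)
  then have \<rho>: "2 \<le> \<rho>"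
    using r by simp
  define W where "W = N powr (1 / 2) * A powr (1 / 2)"
  have W: "G x \<le> W" for x
    using G_sup A N by (simp add: W_def powr_half_sqrt)
  have "(\<integral>\<^sup>+x. ennreal (G x powr \<rho>) \<partial>M) \<le> ennreal (W powr (\<rho> - 2)) * (\<integral>\<^sup>+x. ennreal ((G x)\<^sup>2) \<partial>M)"
    by (rule nn_integral_powr_le_sup_L2[OF _ G_nonneg W \<rho>]) measurable
  also have "\<dots> \<le> ennreal (W powr (\<rho> - 2)) * ennreal A"
    using G_L2 by (rule mult_left_mono) simp
  finally have "enn_powr (\<integral>\<^sup>+x. ennreal (G x powr \<rho>) \<partial>M) (1 / \<rho>)
      \<le> enn_powr (ennreal (W powr (\<rho> - 2) * A)) (1 / \<rho>)"
    by (intro enn_powr_mono) (use \<rho> in \<open>simp_all add: ennreal_mult'\<close>)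
  then have "Lpn M r (\<lambda>x. ennreal (G x)) \<le> ennreal ((W powr (\<rho> - 2) * A) powr (1 / \<rho>))"
    using real G_nonneg A by (simp add: Lpn_def)
  also have "(W powr (\<rho> - 2) * A) powr (1 / \<rho>)
      = N powr ((\<rho> - 2) / (2 * \<rho>)) * A powr ((\<rho> - 2) / (2 * \<rho>) + 1 / \<rho>)"
    using A N by (simp add: W_def powr_mult powr_powr powr_add)
  also have "\<dots> = N powr gamma_qr q r * sqrt A"
    using real \<rho> A by (simp add: gamma_qr_def field_simps powr_half_sqrt)
  finally show ?thesis .
qed (use r in simp)

lemma Lpn_mult_app_le_bernstein:
  fixes f :: "real \<Rightarrow> complex" and m :: "real \<Rightarrow> real" and r :: ereal
  assumes f: "integrable lborel f" and m: "continuous_on UNIV m"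
    and vanish: "\<And>\<xi>. 2 * N < \<bar>\<xi>\<bar> \<Longrightarrow> m \<xi> = 0" and N: "0 < N" and r: "2 \<le> r"
  shows "Lpn lborel r (\<lambda>x. ennreal (norm (mult_app m f x)))
       \<le> ennreal (N powr gamma_qr q r * sqrt ((\<integral>\<xi>. (m \<xi> * norm (fourier f \<xi>))\<^sup>2 \<partial>lborel) / (2 * pi)))"
proof (rule Lpn_le_interpolation[OF _ _ _ _ _ N r])
  define E where "E = (\<integral>\<xi>. (m \<xi> * norm (fourier f \<xi>))\<^sup>2 \<partial>lborel)"
  have E: "0 \<le> E"
    unfolding E_def by (simp add: integral_nonneg_AE)
  then show "0 \<le> E / (2 * pi)"
    by simp
  show "norm (mult_app m f x) \<le> sqrt N * sqrt (E / (2 * pi))" for x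
  proof -
    have "norm (mult_app m f x) \<le> sqrt (2 * N / pi) * sqrt (E / (2 * pi))"
      unfolding E_def using N by (intro norm_mult_app_le[OF f m vanish]) simp_all
    also have "\<dots> \<le> sqrt N * sqrt (E / (2 * pi))"
      using N E pi_gt3 by (intro mult_right_mono real_sqrt_le_mono) (simp_all add: field_simps)
    finally show ?thesis .
  qed
  show "(\<integral>\<^sup>+x. ennreal ((norm (mult_app m f x))\<^sup>2) \<partial>lborel) \<le> ennreal (E / (2 * pi))"
    unfolding E_def using nn_integral_mult_app_square[OF f m vanish] by simp
  have [measurable]: "(\<lambda>\<xi>. of_real (m \<xi>) * fourier f \<xi>) \<in> borel_measurable borel"
    using m continuous_on_fourier[OF f] by (intro borel_measurable_continuous_onI continuous_intros) auto
  show "(\<lambda>x. norm (mult_app m f x)) \<in> borel_measurable lborel"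
    unfolding mult_app_eq_ifourier by measurable
qed simp

lemma integral_mult_fourier_square_le:
  fixes f :: "real \<Rightarrow> complex" and m1 m2 :: "real \<Rightarrow> real"
  assumes f: "integrable lborel f" and m1: "continuous_on UNIV m1" and m2: "continuous_on UNIV m2"
    and vanish1: "\<And>\<xi>. R1 < \<bar>\<xi>\<bar> \<Longrightarrow> m1 \<xi> = 0" and vanish2: "\<And>\<xi>. R2 < \<bar>\<xi>\<bar> \<Longrightarrow> m2 \<xi> = 0"
    and c: "0 \<le> c" and m1_le: "\<And>\<xi>. \<bar>m1 \<xi>\<bar> \<le> c * \<bar>m2 \<xi>\<bar>"
  shows "(\<integral>\<xi>. (m1 \<xi> * norm (fourier f \<xi>))\<^sup>2 \<partial>lborel) \<le> c\<^sup>2 * (\<integral>\<xi>. (m2 \<xi> * norm (fourier f \<xi>))\<^sup>2 \<partial>lborel)"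
proof -
  have "(\<integral>\<xi>. (m1 \<xi> * norm (fourier f \<xi>))\<^sup>2 \<partial>lborel) \<le> (\<integral>\<xi>. c\<^sup>2 * (m2 \<xi> * norm (fourier f \<xi>))\<^sup>2 \<partial>lborel)"
  proof (rule integral_mono)
    show "integrable lborel (\<lambda>\<xi>. (m1 \<xi> * norm (fourier f \<xi>))\<^sup>2)"
      using vanish1 by (intro integrable_continuous_vanishing[of _ R1] continuous_intros m1
          continuous_on_fourier[OF f]) auto
    show "integrable lborel (\<lambda>\<xi>. c\<^sup>2 * (m2 \<xi> * norm (fourier f \<xi>))\<^sup>2)"
      using vanish2 by (intro integrable_continuous_vanishing[of _ R2] continuous_intros m2
          continuous_on_fourier[OF f]) auto
    show "(m1 \<xi> * norm (fourier f \<xi>))\<^sup>2 \<le> c\<^sup>2 * (m2 \<xi> * norm (fourier f \<xi>))\<^sup>2" for \<xi>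
    proof -
      have "\<bar>m1 \<xi> * norm (fourier f \<xi>)\<bar> \<le> \<bar>c * (m2 \<xi> * norm (fourier f \<xi>))\<bar>"
        using mult_right_mono[OF m1_le[of \<xi>] norm_ge_zero[of "fourier f \<xi>"]] c
        by (simp add: abs_mult mult.assoc)
      then show ?thesis
        by (simp add: power_mult_distrib[symmetric] abs_le_square_iff)
    qed
  qed
  then show ?thesis
    by simp
qed

lemma Lpn_mult_app_le:
  fixes f :: "real \<Rightarrow> complex" and m1 m2 :: "real \<Rightarrow> real" and r :: ereal
  assumes f: "integrable lborel f" and m1: "continuous_on UNIV m1" and m2: "continuous_on UNIV m2"
    and vanish1: "\<And>\<xi>. 2 * N < \<bar>\<xi>\<bar> \<Longrightarrow> m1 \<xi> = 0" and vanish2: "\<And>\<xi>. R < \<bar>\<xi>\<bar> \<Longrightarrow> m2 \<xi> = 0"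
    and N: "0 < N" and r: "2 \<le> r" and K: "0 \<le> K"
    and m1_le: "\<And>\<xi>. \<bar>m1 \<xi>\<bar> \<le> K * N powr (- gamma_qr q r) * \<bar>m2 \<xi>\<bar>"
  shows "Lpn lborel r (\<lambda>x. ennreal (norm (mult_app m1 f x)))
       \<le> ennreal K * Lpn lborel 2 (\<lambda>x. ennreal (norm (mult_app m2 f x)))"
proof -
  define c where "c = K * N powr (- gamma_qr q r)"
  define E1 where "E1 = (\<integral>\<xi>. (m1 \<xi> * norm (fourier f \<xi>))\<^sup>2 \<partial>lborel)"
  define E2 where "E2 = (\<integral>\<xi>. (m2 \<xi> * norm (fourier f \<xi>))\<^sup>2 \<partial>lborel)"
  have c: "0 \<le> c"
    using K by (simp add: c_def)
  have E2: "0 \<le> E2"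
    unfolding E2_def by (simp add: integral_nonneg_AE)
  have "sqrt (E1 / (2 * pi)) \<le> sqrt (c\<^sup>2 * (E2 / (2 * pi)))"
    using integral_mult_fourier_square_le[OF f m1 m2 vanish1 vanish2 c m1_le[folded c_def]]
    by (intro real_sqrt_le_mono) (simp add: E1_def E2_def divide_right_mono)
  also have "\<dots> = c * sqrt (E2 / (2 * pi))"
    using c by (simp only: real_sqrt_mult real_sqrt_abs abs_of_nonneg)
  finally have "N powr gamma_qr q r * sqrt (E1 / (2 * pi)) \<le> N powr gamma_qr q r * c * sqrt (E2 / (2 * pi))"
    by (simp add: mult.assoc mult_left_mono)
  also have "N powr gamma_qr q r * c = K"
    using N by (simp add: c_def powr_minus field_simps)
  finally have E1_E2: "N powr gamma_qr q r * sqrt (E1 / (2 * pi)) \<le> K * sqrt (E2 / (2 * pi))" .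
  have "Lpn lborel r (\<lambda>x. ennreal (norm (mult_app m1 f x)))
      \<le> ennreal (N powr gamma_qr q r * sqrt (E1 / (2 * pi)))"
    unfolding E1_def by (rule Lpn_mult_app_le_bernstein[OF f m1 vanish1 N r])
  also have "\<dots> \<le> ennreal (K * sqrt (E2 / (2 * pi)))"
    using E1_E2 by (rule ennreal_leI)
  also have "\<dots> = ennreal K * Lpn lborel 2 (\<lambda>x. ennreal (norm (mult_app m2 f x)))"
  proof -
    have "Lpn lborel 2 (\<lambda>x. ennreal (norm (mult_app m2 f x))) = ennreal (sqrt (E2 / (2 * pi)))"
      unfolding E2_def using E2[unfolded E2_def]
      by (intro Lpn_2_eq_sqrt[OF _ nn_integral_mult_app_square[OF f m2 vanish2]]) simp_all
    then show ?thesis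
      using K E2 by (simp add: ennreal_mult)
  qed
  finally show ?thesis .
qed

section \<open>Littlewood-Paley pieces\<close>

lemma psi_eq_0_low:
  assumes chi_one: "\<forall>\<xi>. \<bar>\<xi>\<bar> \<le> 1 \<longrightarrow> chi \<xi> = 1" and \<xi>: "\<bar>\<xi>\<bar> \<le> 2 powr (real_of_int j - 1)"
  shows "psi chi j \<xi> = 0"
proof -
  define P where "P = 2 powr real_of_int j"
  have P: "0 < P" and half: "2 powr (real_of_int j - 1) = P / 2"
    by (simp_all add: P_def powr_diff)
  have "\<bar>\<xi> / P\<bar> \<le> 1" "\<bar>\<xi> / (P / 2)\<bar> \<le> 1"
    using \<xi> P unfolding half by (simp_all add: abs_divide divide_le_eq)
  then show ?thesis
    using chi_one by (simp add: psi_def chi_le_def half flip: P_def)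
qed

lemma psi_eq_0_high:
  assumes chi_zero: "\<forall>\<xi>. \<bar>\<xi>\<bar> \<ge> 2 \<longrightarrow> chi \<xi> = 0" and \<xi>: "2 * 2 powr real_of_int j \<le> \<bar>\<xi>\<bar>"
  shows "psi chi j \<xi> = 0"
proof -
  define P where "P = 2 powr real_of_int j"
  have P: "0 < P" and half: "2 powr (real_of_int j - 1) = P / 2"
    by (simp_all add: P_def powr_diff)
  have "2 \<le> \<bar>\<xi> / P\<bar>" "2 \<le> \<bar>\<xi> / (P / 2)\<bar>"
    using \<xi> P unfolding P_def[symmetric] by (simp_all add: abs_divide le_divide_eq)
  then show ?thesis
    using chi_zero by (simp add: psi_def chi_le_def half flip: P_def)
qed

lemma continuous_on_psi:
  assumes "continuous_on UNIV chi"
  shows "continuous_on UNIV (psi chi j)"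
  unfolding psi_def[abs_def] chi_le_def
  by (intro continuous_intros continuous_on_compose2[OF assms]) auto

lemma continuous_on_mult_high_cutoff:
  fixes p c h :: "real \<Rightarrow> real"
  assumes p: "continuous_on UNIV p" and c: "continuous_on UNIV c"
    and c_low: "\<forall>\<xi>. \<bar>\<xi>\<bar> \<le> 1 \<longrightarrow> c \<xi> = 0" and h: "continuous_on {\<xi>. 1 / 2 < \<bar>\<xi>\<bar>} h"
  shows "continuous_on UNIV (\<lambda>\<xi>. p \<xi> * (h \<xi> * c \<xi>))"
  unfolding continuous_on_eq_continuous_at[OF open_UNIV]
proof
  fix x :: real
  show "isCont (\<lambda>\<xi>. p \<xi> * (h \<xi> * c \<xi>)) x"
  proof (cases "1 / 2 < \<bar>x\<bar>")
    case True
    have "open {\<xi>::real. 1 / 2 < \<bar>\<xi>\<bar>}"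
      by (intro open_Collect_less continuous_intros)
    then have "isCont h x"
      using h True by (simp add: continuous_on_eq_continuous_at)
    then show ?thesis
      using p c by (simp add: continuous_on_eq_continuous_at continuous_intros)
  next
    case False
    have "open {\<xi>::real. \<bar>\<xi>\<bar> < 1}"
      by (intro open_Collect_less continuous_intros)
    then have "\<forall>\<^sub>F y in nhds x. \<bar>y\<bar> < 1"
      using eventually_nhds_in_open[of "{\<xi>. \<bar>\<xi>\<bar> < 1}" x] False by simp
    then have "\<forall>\<^sub>F y in nhds x. p y * (h y * c y) = 0"
      by eventually_elim (use c_low in auto)
    then have "isCont (\<lambda>\<xi>. p \<xi> * (h \<xi> * c \<xi>)) x = isCont (\<lambda>_. 0 :: real) x"
      by (rule isCont_cong)
    then show ?thesis
      by simp
  qed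
qed

lemma dyadic_powr_le:
  assumes x: "2 powr (real_of_int j - 1) < x" and \<gamma>: "0 \<le> \<gamma>" "\<gamma> \<le> 1"
  shows "2 powr (real_of_int j * \<gamma>) \<le> 2 * x powr \<gamma>"
proof -
  have "2 powr (real_of_int j * \<gamma>) = 2 powr \<gamma> * 2 powr ((real_of_int j - 1) * \<gamma>)"
    by (simp add: powr_add[symmetric] algebra_simps)
  also have "\<dots> \<le> 2 * x powr \<gamma>"
  proof (rule mult_mono)
    show "2 powr \<gamma> \<le> 2"
      using powr_mono[of \<gamma> 1 2] \<gamma> by simp
    show "2 powr ((real_of_int j - 1) * \<gamma>) \<le> x powr \<gamma>"
      using powr_mono2[of \<gamma> "2 powr (real_of_int j - 1)" x] x \<gamma> by (simp add: powr_powr)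
  qed simp_all
  finally show ?thesis .
qed

lemma abs_psi_symbol_le:
  assumes chi_one: "\<forall>\<xi>. \<bar>\<xi>\<bar> \<le> 1 \<longrightarrow> chi \<xi> = 1" and \<gamma>: "0 \<le> \<gamma>" "\<gamma> \<le> 1" and K: "0 \<le> K"
    and m_le: "1 \<le> \<bar>\<xi>\<bar> \<Longrightarrow> \<bar>m \<xi>\<bar> \<le> K * \<bar>\<xi>\<bar> powr - \<beta>"
  shows "\<bar>psi chi j \<xi> * (m \<xi> * chi_gt1 chi \<xi>)\<bar>
       \<le> 2 * K * (2 powr real_of_int j) powr - \<gamma> * \<bar>psi chi j \<xi> * (\<bar>\<xi>\<bar> powr (\<gamma> - \<beta>) * chi_gt1 chi \<xi>)\<bar>"
proof (cases "psi chi j \<xi> = 0 \<or> chi_gt1 chi \<xi> = 0")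
  case False
  then have \<xi>1: "1 \<le> \<bar>\<xi>\<bar>"
    using chi_one by (force simp: chi_gt1_def)
  have \<xi>j: "2 powr (real_of_int j - 1) < \<bar>\<xi>\<bar>"
    using False psi_eq_0_low[OF chi_one] by force
  have "\<bar>m \<xi>\<bar> \<le> K * \<bar>\<xi>\<bar> powr - \<beta>"
    using m_le \<xi>1 .
  also have "\<dots> \<le> K * (2 * 2 powr (- real_of_int j * \<gamma>) * \<bar>\<xi>\<bar> powr \<gamma>) * \<bar>\<xi>\<bar> powr - \<beta>"
  proof -
    have "1 \<le> 2 * 2 powr (- real_of_int j * \<gamma>) * \<bar>\<xi>\<bar> powr \<gamma>"
      using dyadic_powr_le[OF \<xi>j \<gamma>] by (simp add: powr_minus field_simps)
    then have "K * \<bar>\<xi>\<bar> powr - \<beta> * 1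
        \<le> K * \<bar>\<xi>\<bar> powr - \<beta> * (2 * 2 powr (- real_of_int j * \<gamma>) * \<bar>\<xi>\<bar> powr \<gamma>)"
      using K by (intro mult_left_mono) simp_all
    then show ?thesis
      by (simp add: ac_simps)
  qed
  also have "\<dots> = 2 * K * (2 powr real_of_int j) powr - \<gamma> * \<bar>\<xi>\<bar> powr (\<gamma> - \<beta>)"
    using \<xi>1 by (simp add: powr_powr powr_diff powr_minus field_simps)
  finally have "\<bar>m \<xi>\<bar> * (\<bar>psi chi j \<xi>\<bar> * \<bar>chi_gt1 chi \<xi>\<bar>)
      \<le> 2 * K * (2 powr real_of_int j) powr - \<gamma> * \<bar>\<xi>\<bar> powr (\<gamma> - \<beta>) * (\<bar>psi chi j \<xi>\<bar> * \<bar>chi_gt1 chi \<xi>\<bar>)"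
    by (rule mult_right_mono) simp
  then show ?thesis
    by (simp add: abs_mult ac_simps)
qed auto

section \<open>The damped wave symbols\<close>

definition wave_freq :: "real \<Rightarrow> real" where
  "wave_freq \<xi> = sqrt (4 * \<xi>\<^sup>2 - 1)"

lemma wave_freq_pos:
  assumes "1 / 2 < \<bar>\<xi>\<bar>"
  shows "0 < wave_freq \<xi>"
proof -
  have "(1 / 2)\<^sup>2 < \<bar>\<xi>\<bar>\<^sup>2"
    using assms by (intro power_strict_mono) auto
  then have "1 < 4 * \<xi>\<^sup>2"
    by (simp add: power_divide)
  then show ?thesis
    by (simp add: wave_freq_def)
qed

lemma abs_le_wave_freq:
  assumes "1 \<le> \<bar>\<xi>\<bar>"
  shows "\<bar>\<xi>\<bar> \<le> wave_freq \<xi>"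
proof -
  have "1 \<le> \<bar>\<xi>\<bar>\<^sup>2"
    using one_le_power[OF assms, of 2] .
  then have "\<bar>\<xi>\<bar>\<^sup>2 \<le> 4 * \<xi>\<^sup>2 - 1"
    by simp
  then show ?thesis
    unfolding wave_freq_def by (simp add: real_le_rsqrt)
qed

lemma wave_freq_nonzero: "\<forall>\<xi> \<in> {\<xi>. 1 / 2 < \<bar>\<xi>\<bar>}. wave_freq \<xi> \<noteq> 0"
proof
  fix \<xi> :: real
  assume "\<xi> \<in> {\<xi>. 1 / 2 < \<bar>\<xi>\<bar>}"
  then have "0 < wave_freq \<xi>"
    by (intro wave_freq_pos) simp
  then show "wave_freq \<xi> \<noteq> 0"
    by simp
qed

lemma continuous_on_wave_freq: "continuous_on S wave_freq"
  unfolding wave_freq_def by (intro continuous_intros)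

lemma D1sym_eq:
  "1 / 2 < \<bar>\<xi>\<bar> \<Longrightarrow> D1sym t \<xi> = exp (- t / 2) * (2 / wave_freq \<xi>) * sin (t * wave_freq \<xi> / 2)"
  by (simp add: D1sym_def wave_freq_def)

lemma dtD1sym_eq:
  assumes \<xi>: "1 / 2 < \<bar>\<xi>\<bar>"
  shows "dtD1sym t \<xi> = exp (- t / 2) * (cos (t * wave_freq \<xi> / 2) - sin (t * wave_freq \<xi> / 2) / wave_freq \<xi>)"
proof -
  define w where "w = wave_freq \<xi>"
  have w: "0 < w"
    unfolding w_def using \<xi> by (rule wave_freq_pos)
  have "((\<lambda>\<tau>. exp (- \<tau> / 2) * (2 / w) * sin (\<tau> * w / 2)) has_real_derivative
      exp (- t / 2) * (cos (t * w / 2) - sin (t * w / 2) / w)) (at t)"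
    using w by (auto intro!: derivative_eq_intros simp: field_simps)
  moreover have "(\<lambda>\<tau>. D1sym \<tau> \<xi>) = (\<lambda>\<tau>. exp (- \<tau> / 2) * (2 / w) * sin (\<tau> * w / 2))"
    using D1sym_eq[OF \<xi>] by (simp add: w_def)
  ultimately show ?thesis
    unfolding dtD1sym_def w_def[symmetric] by (simp add: DERIV_imp_deriv)
qed

lemma abs_D1sym_le:
  assumes \<xi>: "1 \<le> \<bar>\<xi>\<bar>"
  shows "\<bar>D1sym t \<xi>\<bar> \<le> 2 * exp (- t / 2) * \<bar>\<xi>\<bar> powr - 1"
proof -
  have w: "\<bar>\<xi>\<bar> \<le> wave_freq \<xi>" "0 < wave_freq \<xi>"
    using \<xi> by (simp_all add: abs_le_wave_freq wave_freq_pos)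
  have "\<bar>D1sym t \<xi>\<bar> = exp (- t / 2) * (2 / wave_freq \<xi>) * \<bar>sin (t * wave_freq \<xi> / 2)\<bar>"
    using \<xi> w by (simp add: D1sym_eq abs_mult)
  also have "\<dots> \<le> exp (- t / 2) * (2 / \<bar>\<xi>\<bar>) * 1"
  proof (rule mult_mono)
    show "exp (- t / 2) * (2 / wave_freq \<xi>) \<le> exp (- t / 2) * (2 / \<bar>\<xi>\<bar>)"
      using \<xi> w by (intro mult_left_mono divide_left_mono) simp_all
  qed (use \<xi> in simp_all)
  also have "\<dots> = 2 * exp (- t / 2) * \<bar>\<xi>\<bar> powr - 1"
    using \<xi> by (simp add: powr_minus_divide)
  finally show ?thesis .
qed

lemma abs_dtD1sym_le:
  assumes \<xi>: "1 \<le> \<bar>\<xi>\<bar>"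
  shows "\<bar>dtD1sym t \<xi>\<bar> \<le> 2 * exp (- t / 2)"
proof -
  have w: "1 \<le> wave_freq \<xi>"
    using \<xi> abs_le_wave_freq[OF \<xi>] by linarith
  have "\<bar>sin (t * wave_freq \<xi> / 2)\<bar> \<le> wave_freq \<xi>"
    using w abs_sin_le_one[of "t * wave_freq \<xi> / 2"] by linarith
  then have "\<bar>sin (t * wave_freq \<xi> / 2) / wave_freq \<xi>\<bar> \<le> 1"
    using w by (simp add: abs_divide divide_le_eq)
  moreover have "\<bar>cos (t * wave_freq \<xi> / 2)\<bar> \<le> 1"
    by simp
  ultimately have "\<bar>cos (t * wave_freq \<xi> / 2) - sin (t * wave_freq \<xi> / 2) / wave_freq \<xi>\<bar> \<le> 2"
    by linarith
  then have "exp (- t / 2) * \<bar>cos (t * wave_freq \<xi> / 2) - sin (t * wave_freq \<xi> / 2) / wave_freq \<xi>\<bar>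
      \<le> exp (- t / 2) * 2"
    by (rule mult_left_mono) simp
  then show ?thesis
    using \<xi> by (simp add: dtD1sym_eq abs_mult mult.commute)
qed

lemma continuous_on_D1sym: "continuous_on {\<xi>. 1 / 2 < \<bar>\<xi>\<bar>} (D1sym t)"
proof -
  have "continuous_on {\<xi>. 1 / 2 < \<bar>\<xi>\<bar>}
      (\<lambda>\<xi>. exp (- t / 2) * (2 / wave_freq \<xi>) * sin (t * wave_freq \<xi> / 2))"
    by (intro continuous_intros continuous_on_wave_freq wave_freq_nonzero) simp_all
  then show ?thesis
    by (rule continuous_on_cong[THEN iffD1, rotated 2]) (auto simp: D1sym_eq)
qed

lemma continuous_on_dtD1sym: "continuous_on {\<xi>. 1 / 2 < \<bar>\<xi>\<bar>} (dtD1sym t)"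
proof -
  have "continuous_on {\<xi>. 1 / 2 < \<bar>\<xi>\<bar>}
      (\<lambda>\<xi>. exp (- t / 2) * (cos (t * wave_freq \<xi> / 2) - sin (t * wave_freq \<xi> / 2) / wave_freq \<xi>))"
    by (intro continuous_intros continuous_on_wave_freq wave_freq_nonzero) simp_all
  then show ?thesis
    by (rule continuous_on_cong[THEN iffD1, rotated 2]) (auto simp: dtD1sym_eq)
qed

section \<open>Besov and time norms\<close>

lemma besov_le:
  assumes c: "0 < c"
    and blocks: "\<And>j. Lpn lborel r (\<lambda>x. ennreal (norm (mult_app (\<lambda>\<xi>. psi chi j \<xi> * m1 \<xi>) f x)))
      \<le> ennreal c * Lpn lborel 2 (\<lambda>x. ennreal (norm (mult_app (\<lambda>\<xi>. psi chi j \<xi> * m2 \<xi>) f x)))"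
  shows "besov chi s r m1 f \<le> ennreal c * besov chi s 2 m2 f"
proof -
  let ?L1 = "\<lambda>j. Lpn lborel r (\<lambda>x. ennreal (norm (mult_app (\<lambda>\<xi>. psi chi j \<xi> * m1 \<xi>) f x)))"
  let ?L2 = "\<lambda>j. Lpn lborel 2 (\<lambda>x. ennreal (norm (mult_app (\<lambda>\<xi>. psi chi j \<xi> * m2 \<xi>) f x)))"
  let ?w = "\<lambda>j::int. ennreal (2 powr (real_of_int j * s))"
  have "(?w j * ?L1 j)\<^sup>2 \<le> ennreal (c\<^sup>2) * (?w j * ?L2 j)\<^sup>2" for j
  proof -
    have "(?w j * ?L1 j)\<^sup>2 \<le> (?w j * (ennreal c * ?L2 j))\<^sup>2"
      using blocks by (intro power_mono mult_left_mono) auto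
    then show ?thesis
      using c by (simp add: power_mult_distrib ennreal_power mult_ac)
  qed
  then have "(\<integral>\<^sup>+j. (?w j * ?L1 j)\<^sup>2 \<partial>count_space UNIV)
      \<le> ennreal (c\<^sup>2) * (\<integral>\<^sup>+j. (?w j * ?L2 j)\<^sup>2 \<partial>count_space UNIV)"
    by (subst nn_integral_cmult[symmetric]) (auto intro: nn_integral_mono)
  then have "besov chi s r m1 f
      \<le> enn_powr (ennreal (c\<^sup>2) * (\<integral>\<^sup>+j. (?w j * ?L2 j)\<^sup>2 \<partial>count_space UNIV)) (1 / 2)"
    unfolding besov_def by (rule enn_powr_mono) simp
  also have "\<dots> = ennreal c * besov chi s 2 m2 f"
    unfolding besov_def by (rule enn_powr_mult_square[OF c])
  finally show ?thesis .
qed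

lemma nn_integral_exp_neg: "(\<integral>\<^sup>+t. ennreal (exp (- t)) * indicator {0..} t \<partial>lborel) = 1"
proof -
  interpret prob_space "density lborel (exponential_density 1)"
    by (rule prob_space_exponential_density) simp
  have "(\<integral>\<^sup>+t. ennreal (exp (- t)) * indicator {0..} t \<partial>lborel)
      = (\<integral>\<^sup>+t. ennreal (exponential_density 1 t) \<partial>lborel)"
    by (intro nn_integral_cong) (auto simp: exponential_density_def indicator_def)
  also have "\<dots> = 1"
    using emeasure_space_1 by (simp add: emeasure_density)
  finally show ?thesis .
qed

lemma nn_integral_powr_exp_decay_le:
  fixes F :: "real \<Rightarrow> ennreal"
  assumes C: "0 \<le> C" and \<rho>: "2 \<le> \<rho>" and F_le: "\<And>t. 0 \<le> t \<Longrightarrow> F t \<le> ennreal (C * exp (- t / 2))"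
  shows "(\<integral>\<^sup>+t. enn_powr (F t) \<rho> \<partial>restrict_space lborel {t. 0 \<le> t \<and> ereal t < T}) \<le> ennreal (C powr \<rho>)"
proof -
  let ?M = "restrict_space lborel {t. 0 \<le> t \<and> ereal t < T}"
  have "enn_powr (F t) \<rho> \<le> ennreal (C powr \<rho>) * (ennreal (exp (- t)) * indicator {0..} t)"
    if "t \<in> space ?M" for t
  proof -
    have t: "0 \<le> t"
      using that by (simp add: space_restrict_space)
    have "exp (- t / 2) powr \<rho> = exp (- t / 2 * \<rho>)"
      by (simp add: powr_def)
    then have "(C * exp (- t / 2)) powr \<rho> = C powr \<rho> * exp (- t / 2 * \<rho>)"
      using C by (simp add: powr_mult)
    also have "\<dots> \<le> C powr \<rho> * exp (- t)"
      using t \<rho> by (intro mult_left_mono) (auto simp: mult_left_mono)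
    finally have "enn_powr (F t) \<rho> \<le> ennreal (C powr \<rho> * exp (- t))"
      using enn_powr_mono[OF F_le[OF t], of \<rho>] \<rho> C by (simp add: order_trans ennreal_leI)
    then show ?thesis
      using t by (simp add: ennreal_mult indicator_def)
  qed
  then have "(\<integral>\<^sup>+t. enn_powr (F t) \<rho> \<partial>?M)
      \<le> (\<integral>\<^sup>+t. ennreal (C powr \<rho>) * (ennreal (exp (- t)) * indicator {0..} t) \<partial>?M)"
    by (intro nn_integral_mono)
  also have "\<dots> \<le> (\<integral>\<^sup>+t. ennreal (C powr \<rho>) * (ennreal (exp (- t)) * indicator {0..} t) \<partial>lborel)"
    by (subst nn_integral_restrict_space) (auto intro!: nn_integral_mono simp: indicator_def)
  also have "\<dots> = ennreal (C powr \<rho>)"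
    by (subst nn_integral_cmult) (simp_all add: nn_integral_exp_neg)
  finally show ?thesis .
qed

lemma Lpn_exp_decay_le_const:
  fixes F :: "real \<Rightarrow> ennreal" and q T :: ereal
  assumes C: "0 \<le> C" and q: "2 \<le> q" and F_le: "\<And>t. 0 \<le> t \<Longrightarrow> F t \<le> ennreal (C * exp (- t / 2))"
  shows "Lpn (restrict_space lborel {t. 0 \<le> t \<and> ereal t < T}) q F \<le> ennreal C"
proof (cases q)
  case PInf
  have "Inf {c. AE t in restrict_space lborel {t. 0 \<le> t \<and> ereal t < T}. F t \<le> c} \<le> ennreal C"
  proof (rule Inf_lower, intro CollectI AE_I2)
    fix t
    assume "t \<in> space (restrict_space lborel {t. 0 \<le> t \<and> ereal t < T})"
    then have t: "0 \<le> t"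
      by (simp add: space_restrict_space)
    have "C * exp (- t / 2) \<le> C"
      using C t by (intro mult_left_le) simp_all
    then show "F t \<le> ennreal C"
      using F_le[OF t] by (meson ennreal_leI order_trans)
  qed
  then show ?thesis
    using PInf by (simp add: Lpn_def)
next
  case (real \<rho>)
  then have \<rho>: "2 \<le> \<rho>"
    using q by simp
  have "Lpn (restrict_space lborel {t. 0 \<le> t \<and> ereal t < T}) q F \<le> ennreal ((C powr \<rho>) powr (1 / \<rho>))"
    using enn_powr_mono[OF nn_integral_powr_exp_decay_le[OF C \<rho> F_le], of "1 / \<rho>"] real \<rho>
    by (simp add: Lpn_def)
  then show ?thesis
    using \<rho> C by (simp add: powr_powr)
qed (use q in simp)

lemma Lpn_exp_decay_le:
  fixes F :: "real \<Rightarrow> ennreal" and q T :: ereal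
  assumes c: "0 < c" and q: "2 \<le> q" and F_le: "\<And>t. 0 \<le> t \<Longrightarrow> F t \<le> ennreal (c * exp (- t / 2)) * B"
  shows "Lpn (restrict_space lborel {t. 0 \<le> t \<and> ereal t < T}) q F \<le> ennreal c * B"
proof (cases B)
  case (real b)
  then have "Lpn (restrict_space lborel {t. 0 \<le> t \<and> ereal t < T}) q F \<le> ennreal (c * b)"
    using c F_le by (intro Lpn_exp_decay_le_const[OF _ q]) (simp_all add: ennreal_mult'[symmetric] mult_ac)
  then show ?thesis
    using real c by (simp add: ennreal_mult)
qed (use c in \<open>simp add: ennreal_mult_top\<close>)

lemma gamma_qr_bounds:
  assumes "2 \<le> r"
  shows "0 \<le> gamma_qr q r" "gamma_qr q r \<le> 1 / 2"
proof -
  have "0 \<le> gamma_qr q r \<and> gamma_qr q r \<le> 1 / 2"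
  proof (cases r)
    case (real \<rho>)
    then have "2 \<le> \<rho>"
      using assms by simp
    then show ?thesis
      using real by (simp add: gamma_qr_def divide_le_eq)
  qed (use assms in \<open>simp_all add: gamma_qr_def\<close>)
  then show "0 \<le> gamma_qr q r" "gamma_qr q r \<le> 1 / 2"
    by simp_all
qed

lemma LqB_le_besov:
  fixes m :: "real \<Rightarrow> real \<Rightarrow> real" and q r :: ereal
  assumes chi: "continuous_on UNIV chi" and chi_one: "\<forall>\<xi>. \<bar>\<xi>\<bar> \<le> 1 \<longrightarrow> chi \<xi> = 1"
    and chi_zero: "\<forall>\<xi>. \<bar>\<xi>\<bar> \<ge> 2 \<longrightarrow> chi \<xi> = 0"
    and q: "2 \<le> q" and r: "2 \<le> r" and f: "integrable lborel f"
    and m_cont: "\<And>t. continuous_on {\<xi>. 1 / 2 < \<bar>\<xi>\<bar>} (m t)"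
    and m_le: "\<And>t \<xi>. 1 \<le> \<bar>\<xi>\<bar> \<Longrightarrow> \<bar>m t \<xi>\<bar> \<le> 2 * exp (- t / 2) * \<bar>\<xi>\<bar> powr - \<beta>"
  shows "LqB chi T q s r (\<lambda>t \<xi>. m t \<xi> * chi_gt1 chi \<xi>) f
       \<le> ennreal 4 * besov chi s 2 (\<lambda>\<xi>. \<bar>\<xi>\<bar> powr (gamma_qr q r - \<beta>) * chi_gt1 chi \<xi>) f"
  unfolding LqB_def
proof (rule Lpn_exp_decay_le[OF _ q])
  let ?\<gamma> = "gamma_qr q r"
  have cutoff: "continuous_on UNIV (chi_gt1 chi)" "\<forall>\<xi>. \<bar>\<xi>\<bar> \<le> 1 \<longrightarrow> chi_gt1 chi \<xi> = 0"
    using chi chi_one by (auto simp: chi_gt1_def[abs_def] intro!: continuous_intros)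
  fix t :: real
  show "besov chi s r (\<lambda>\<xi>. m t \<xi> * chi_gt1 chi \<xi>) f
      \<le> ennreal (4 * exp (- t / 2)) * besov chi s 2 (\<lambda>\<xi>. \<bar>\<xi>\<bar> powr (?\<gamma> - \<beta>) * chi_gt1 chi \<xi>) f"
  proof (rule besov_le)
    fix j :: int
    have N: "0 < 2 powr real_of_int j"
      by simp
    have vanish: "psi chi j \<xi> * h \<xi> = 0" if "2 * 2 powr real_of_int j < \<bar>\<xi>\<bar>" for h :: "real \<Rightarrow> real" and \<xi>
      using psi_eq_0_high[OF chi_zero] that by simp
    show "Lpn lborel r (\<lambda>x. ennreal (norm (mult_app (\<lambda>\<xi>. psi chi j \<xi> * (m t \<xi> * chi_gt1 chi \<xi>)) f x)))
        \<le> ennreal (4 * exp (- t / 2))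
          * Lpn lborel 2 (\<lambda>x. ennreal (norm (mult_app (\<lambda>\<xi>. psi chi j \<xi> * (\<bar>\<xi>\<bar> powr (?\<gamma> - \<beta>) * chi_gt1 chi \<xi>)) f x)))"
    proof (rule Lpn_mult_app_le[where R = "2 * 2 powr real_of_int j", OF f _ _ vanish vanish N r])
      show "continuous_on UNIV (\<lambda>\<xi>. psi chi j \<xi> * (m t \<xi> * chi_gt1 chi \<xi>))"
        by (rule continuous_on_mult_high_cutoff[OF continuous_on_psi[OF chi] cutoff m_cont])
      show "continuous_on UNIV (\<lambda>\<xi>. psi chi j \<xi> * (\<bar>\<xi>\<bar> powr (?\<gamma> - \<beta>) * chi_gt1 chi \<xi>))"
        by (rule continuous_on_mult_high_cutoff[OF continuous_on_psi[OF chi] cutoff])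
          (auto intro!: continuous_intros)
      show "\<bar>psi chi j \<xi> * (m t \<xi> * chi_gt1 chi \<xi>)\<bar>
          \<le> 4 * exp (- t / 2) * (2 powr real_of_int j) powr - ?\<gamma>
            * \<bar>psi chi j \<xi> * (\<bar>\<xi>\<bar> powr (?\<gamma> - \<beta>) * chi_gt1 chi \<xi>)\<bar>" for \<xi>
      proof -
        have "0 \<le> ?\<gamma>" "?\<gamma> \<le> 1"
          using gamma_qr_bounds[OF r, of q] by linarith+
        then show ?thesis
          using abs_psi_symbol_le[where m = "m t" and K = "2 * exp (- t / 2)", OF chi_one _ _ _ m_le]
          by simp
      qed
    qed simp_all
  qed simp
qed simp

theorem lemmaA3:
  fixes chi :: "real \<Rightarrow> real" and s :: real and q r :: ereal
  assumes chi_smooth: "\<forall>n x. ((deriv ^^ n) chi) differentiable (at x)"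
    and chi_even: "\<forall>\<xi>. chi (- \<xi>) = chi \<xi>"
    and chi_one: "\<forall>\<xi>. \<bar>\<xi>\<bar> \<le> 1 \<longrightarrow> chi \<xi> = 1"
    and chi_zero: "\<forall>\<xi>. \<bar>\<xi>\<bar> \<ge> 2 \<longrightarrow> chi \<xi> = 0"
    and q: "2 \<le> q" and r: "2 \<le> r"
  shows "\<exists>C>0. \<forall>(T::ereal) (f::real \<Rightarrow> complex). 0 < T \<longrightarrow> integrable lborel f \<longrightarrow>
           LqB chi T q s r (\<lambda>t \<xi>. D1sym t \<xi> * chi_gt1 chi \<xi>) f
             \<le> ennreal C * besov chi s 2 (\<lambda>\<xi>. \<bar>\<xi>\<bar> powr (gamma_qr q r - 1) * chi_gt1 chi \<xi>) f
         \<and> LqB chi T q s r (\<lambda>t \<xi>. dtD1sym t \<xi> * chi_gt1 chi \<xi>) f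
             \<le> ennreal C * besov chi s 2 (\<lambda>\<xi>. \<bar>\<xi>\<bar> powr (gamma_qr q r) * chi_gt1 chi \<xi>) f"
proof -
  have chi: "continuous_on UNIV chi"
    using chi_smooth[rule_format, of 0]
    by (simp add: continuous_at_imp_continuous_on differentiable_imp_continuous_within)
  have dtD1sym_le: "\<bar>dtD1sym t \<xi>\<bar> \<le> 2 * exp (- t / 2) * \<bar>\<xi>\<bar> powr - 0" if "1 \<le> \<bar>\<xi>\<bar>" for t \<xi>
    using abs_dtD1sym_le[OF that] that by auto
  show ?thesis
  proof (intro exI[of _ 4] conjI allI impI)
    fix T :: ereal and f :: "real \<Rightarrow> complex"
    assume f: "integrable lborel f"
    show "LqB chi T q s r (\<lambda>t \<xi>. D1sym t \<xi> * chi_gt1 chi \<xi>) f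
        \<le> ennreal 4 * besov chi s 2 (\<lambda>\<xi>. \<bar>\<xi>\<bar> powr (gamma_qr q r - 1) * chi_gt1 chi \<xi>) f"
      by (rule LqB_le_besov[OF chi chi_one chi_zero q r f continuous_on_D1sym abs_D1sym_le])
    show "LqB chi T q s r (\<lambda>t \<xi>. dtD1sym t \<xi> * chi_gt1 chi \<xi>) f
        \<le> ennreal 4 * besov chi s 2 (\<lambda>\<xi>. \<bar>\<xi>\<bar> powr (gamma_qr q r) * chi_gt1 chi \<xi>) f"
      using LqB_le_besov[OF chi chi_one chi_zero q r f continuous_on_dtD1sym dtD1sym_le] by simp
  qed simp
qed

end
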